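(* Let $\Lambda$ be a ring and $\Gamma$ a (not necessarily unital) subring of $\Lambda$ such that $\Lambda=\Gamma\oplus J(\Lambda)$ as additive groups, where $J(\Lambda)$ is the Jacobson radical of $\Lambda$. Then every central idempotent of $\Lambda$ lies in $\Gamma$. *)

theory Defs
  imports Main
begin

definition left_ideal :: "'a::ring_1 set \<Rightarrow> bool" where
  "left_ideal I \<longleftrightarrow> 0 \<in> I \<and> (\<forall>x\<in>I. \<forall>y\<in>I. x + y \<in> I) \<and> (\<forall>x\<in>I. - x \<in> I)
     \<and> (\<forall>r x. x \<in> I \<longrightarrow> r * x \<in> I)"

definition maximal_left_ideal :: "'a::ring_1 set \<Rightarrow> bool" where
  "maximal_left_ideal I \<longleftrightarrow> left_ideal I \<and> I \<noteq> UNIV \<and>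
     (\<forall>K. left_ideal K \<and> I \<subseteq> K \<and> K \<noteq> UNIV \<longrightarrow> K = I)"

definition jacobson_radical :: "'a::ring_1 set" where
  "jacobson_radical = \<Inter> {I. maximal_left_ideal I}"

definition nonunital_subring :: "'a::ring_1 set \<Rightarrow> bool" where
  "nonunital_subring S \<longleftrightarrow> 0 \<in> S \<and> (\<forall>x\<in>S. \<forall>y\<in>S. x + y \<in> S) \<and> (\<forall>x\<in>S. - x \<in> S)
     \<and> (\<forall>x\<in>S. \<forall>y\<in>S. x * y \<in> S)"

definition central_idempotent :: "'a::ring_1 \<Rightarrow> bool" where
  "central_idempotent e \<longleftrightarrow> e * e = e \<and> (\<forall>x. e * x = x * e)"

end

theory Submission
  imports Defs
begin

text \<open>Write \<open>e = g + j\<close> with \<open>g \<in> \<Gamma>\<close> and \<open>j \<in> J(\<Lambda>)\<close>. Since \<open>e\<close> is central,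
  \<open>g\<^sup>2 - g = (j - 2e + 1) j\<close> lies in \<open>\<Gamma> \<inter> J(\<Lambda>) = 0\<close>, so \<open>g\<close> is an idempotent commuting
  with \<open>e\<close>. For commuting idempotents, \<open>x = e - g\<close> satisfies \<open>x\<^sup>3 = x\<close>, so \<open>x\<^sup>2\<close> is an
  idempotent in the radical and hence \<open>0\<close>, giving \<open>e - g = x\<^sup>3 = 0\<close>. An idempotent \<open>u\<close> of the
  radical vanishes by Krull's lemma: otherwise the proper left ideal \<open>\<Lambda>(1 - u)\<close> lies in a
  maximal left ideal, which then contains \<open>u + (1 - u) = 1\<close>.\<close>

lemma left_ideal_mult_left: "left_ideal I \<Longrightarrow> x \<in> I \<Longrightarrow> r * x \<in> I"
  unfolding left_ideal_def by blast

lemma left_ideal_one_imp_UNIV: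
  assumes "left_ideal I" "1 \<in> I"
  shows "I = UNIV"
  using left_ideal_mult_left[OF assms, of r for r] by auto

lemma left_ideal_principal: "left_ideal (range (\<lambda>r. r * a))"
  unfolding left_ideal_def
proof (intro conjI ballI allI impI)
  show "0 \<in> range (\<lambda>r. r * a)" by (rule range_eqI[of _ _ 0]) simp
next
  fix x y assume "x \<in> range (\<lambda>r. r * a)" "y \<in> range (\<lambda>r. r * a)"
  then obtain s t where "x = s * a" "y = t * a" by blast
  then have "x + y = (s + t) * a" by (simp add: distrib_right)
  then show "x + y \<in> range (\<lambda>r. r * a)" by (rule range_eqI)
next
  fix x assume "x \<in> range (\<lambda>r. r * a)"
  then obtain s where "x = s * a" by blast
  then have "- x = (- s) * a" by simp
  then show "- x \<in> range (\<lambda>r. r * a)" by (rule range_eqI)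
next
  fix r x assume "x \<in> range (\<lambda>r. r * a)"
  then obtain s where "x = s * a" by blast
  then have "r * x = (r * s) * a" by (simp add: mult.assoc)
  then show "r * x \<in> range (\<lambda>r. r * a)" by (rule range_eqI)
qed

lemma left_ideal_Union_chain:
  assumes C: "C \<in> chains {K. left_ideal K \<and> L \<subseteq> K \<and> 1 \<notin> K}" and "C \<noteq> {}"
  shows "left_ideal (\<Union>C) \<and> L \<subseteq> \<Union>C \<and> 1 \<notin> \<Union>C"
proof -
  have mem: "left_ideal K \<and> L \<subseteq> K \<and> 1 \<notin> K" if "K \<in> C" for K
    using chainsD2[OF C] that by blast
  have "x + y \<in> \<Union>C" if "x \<in> \<Union>C" "y \<in> \<Union>C" for x y
  proof -
    from that obtain A B where AB: "A \<in> C" "B \<in> C" "x \<in> A" "y \<in> B" by blast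
    from chainsD[OF C AB(1,2)] obtain K where "K \<in> C" "x \<in> K" "y \<in> K"
      using AB by blast
    then show ?thesis using mem[of K] unfolding left_ideal_def by blast
  qed
  moreover obtain K0 where "K0 \<in> C" using \<open>C \<noteq> {}\<close> by blast
  ultimately show ?thesis using mem unfolding left_ideal_def by blast
qed

lemma left_ideal_imp_maximal_left_ideal:
  assumes "left_ideal L" "1 \<notin> L"
  obtains M where "maximal_left_ideal M" "L \<subseteq> M"
proof -
  let ?P = "{K. left_ideal K \<and> L \<subseteq> K \<and> 1 \<notin> K}"
  have "\<exists>U\<in>?P. \<forall>X\<in>C. X \<subseteq> U" if "C \<in> chains ?P" for C
  proof (cases "C = {}")
    case True
    with assms show ?thesis by blast
  next
    case False
    with left_ideal_Union_chain[OF that] show ?thesis by blast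
  qed
  then obtain M where M: "M \<in> ?P" "\<forall>X\<in>?P. M \<subseteq> X \<longrightarrow> X = M"
    using Zorn_Lemma2[of ?P] by blast
  have "maximal_left_ideal M"
    unfolding maximal_left_ideal_def using M left_ideal_one_imp_UNIV by blast
  with M show thesis using that by blast
qed

lemma left_ideal_Inter:
  assumes "\<And>I. I \<in> S \<Longrightarrow> left_ideal I"
  shows "left_ideal (\<Inter>S)"
  using assms unfolding left_ideal_def by simp

lemma left_ideal_jacobson_radical: "left_ideal jacobson_radical"
  unfolding jacobson_radical_def by (rule left_ideal_Inter) (simp add: maximal_left_ideal_def)

lemma idempotent_in_jacobson_radical_eq_0:
  fixes u :: "'a::ring_1"
  assumes "u * u = u" "u \<in> jacobson_radical"
  shows "u = 0"
proof (rule ccontr)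
  assume "u \<noteq> 0"
  let ?L = "range (\<lambda>r. r * (1 - u))"
  have "1 \<notin> ?L"
  proof
    assume "1 \<in> ?L"
    then obtain r where "1 = r * (1 - u)" by blast
    then have "u = r * ((1 - u) * u)" by (metis mult.assoc mult_1)
    with \<open>u * u = u\<close> \<open>u \<noteq> 0\<close> show False by (simp add: left_diff_distrib)
  qed
  with left_ideal_principal obtain M where M: "maximal_left_ideal M" "?L \<subseteq> M"
    by (rule left_ideal_imp_maximal_left_ideal)
  have M_ideal: "left_ideal M" and "M \<noteq> UNIV"
    using M(1) unfolding maximal_left_ideal_def by blast+
  have "u \<in> M" using assms(2) M(1) unfolding jacobson_radical_def by blast
  moreover have "1 - u \<in> M"
    using M(2) range_eqI[of "1 - u" "\<lambda>r. r * (1 - u)" 1] by auto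
  ultimately have "u + (1 - u) \<in> M"
    using M_ideal unfolding left_ideal_def by blast
  then have "M = UNIV" using M_ideal left_ideal_one_imp_UNIV by simp
  with \<open>M \<noteq> UNIV\<close> show False ..
qed

lemma commuting_idempotents_cube_diff:
  fixes e g :: "'a::ring"
  assumes ee: "e * e = e" and gg: "g * g = g" and comm: "g * e = e * g"
  shows "(e - g) * ((e - g) * (e - g)) = e - g"
proof -
  have eeg: "e * (e * g) = e * g" by (simp add: mult.assoc[symmetric] ee)
  have geg: "g * (e * g) = e * g" by (simp only: mult.assoc[symmetric] comm) (simp add: mult.assoc gg)
  have "(e - g) * (e - g) = e + g - e * g - e * g"
    by (simp add: left_diff_distrib right_diff_distrib ee gg comm)
  then have "(e - g) * ((e - g) * (e - g)) = (e - g) * (e + g - e * g - e * g)" by simp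
  also have "\<dots> = e * e + e * g - e * (e * g) - e * (e * g) - g * e - g * g + g * (e * g) + g * (e * g)"
    by (simp add: algebra_simps)
  also have "\<dots> = e - g"
    by (simp add: ee gg comm eeg geg)
  finally show ?thesis .
qed

lemma commuting_idempotents_eq_if_diff_in_jacobson_radical:
  fixes e g :: "'a::ring_1"
  assumes "e * e = e" "g * g = g" "g * e = e * g" "e - g \<in> jacobson_radical"
  shows "e = g"
proof -
  let ?x = "e - g"
  have cube: "?x * (?x * ?x) = ?x" using assms(1-3) by (rule commuting_idempotents_cube_diff)
  have "(?x * ?x) * (?x * ?x) = ?x * ?x" by (simp only: mult.assoc cube)
  moreover have "?x * ?x \<in> jacobson_radical"
    using left_ideal_jacobson_radical assms(4) by (rule left_ideal_mult_left)
  ultimately have "?x * ?x = 0" by (rule idempotent_in_jacobson_radical_eq_0)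
  with cube show ?thesis by simp
qed

theorem lemma5p2:
  fixes \<Gamma> :: "'a::ring_1 set"
  assumes "nonunital_subring \<Gamma>"
    and "\<Gamma> \<inter> jacobson_radical = {0}"
    and "\<forall>x. \<exists>g\<in>\<Gamma>. \<exists>j\<in>jacobson_radical. x = g + j"
    and "central_idempotent e"
  shows "e \<in> \<Gamma>"
proof -
  obtain g j where g: "g \<in> \<Gamma>" and j: "j \<in> jacobson_radical" and "e = g + j"
    using assms(3) by blast
  then have g_eq: "g = e - j" by simp
  have ee: "e * e = e" and central: "\<And>x. x * e = e * x"
    using assms(4) unfolding central_idempotent_def by (blast, metis)
  have "g * g - g = (j - e - e + 1) * j"
    unfolding g_eq using ee central[of j] by (simp add: algebra_simps)
  also have "\<dots> \<in> jacobson_radical"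
    using left_ideal_jacobson_radical j by (rule left_ideal_mult_left)
  finally have "g * g - g \<in> jacobson_radical" .
  moreover have "g * g - g \<in> \<Gamma>"
    using g assms(1) unfolding nonunital_subring_def diff_conv_add_uminus by blast
  ultimately have "g * g - g = 0" using assms(2) by blast
  then have "g * g = g" by simp
  moreover have "e - g \<in> jacobson_radical" using j g_eq by simp
  ultimately have "e = g"
    using ee central[of g] commuting_idempotents_eq_if_diff_in_jacobson_radical by blast
  with g show ?thesis by simp
qed

end
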